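(* A real number $\beta>1$ is a well-posed Salem number of degree 6 if and only if $\beta$ is the dominant root of a polynomial in $\mathbb Z[x]$ of the form $P(x)=x^6-ax^{5}-bx^{4}-cx^{3}-bx^{2}-ax+1$ (with $a,b,c\in\mathbb Z$) satisfying the following conditions: (1) $2-2b<2a+c$; (2) $c<2a$; (3) $|b+2|<c-a$.
   Context: A Salem number is an algebraic integer $>1$ all of whose conjugates have modulus not greater than one, with at least one conjugate of modulus one. For a sextic Salem number $\beta$ with minimal polynomial $P(x)=x^6-ax^{5}-bx^{4}-cx^{3}-bx^{2}-ax+1$, its trace polynomial is $Q(y)=y^3-ay^2-(b+3)y-(c-2a)=(y-\gamma)(y-\alpha_1)(y-\alpha_2)$, obtained by writing $P(x)/x^3=Q(y)$ with $y=x+x^{-1}$ (so $\gamma=\beta+1/\beta$). The Salem number $\beta$ is called well-posed if its trace polynomial $Q(y)$ has three roots $\gamma,\alpha_1,\alpha_2$ such that $-1<\alpha_1<0<\alpha_2<1<2<\gamma$. *)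

theory Defs
  imports "HOL-Analysis.Analysis" "HOL-Computational_Algebra.Polynomial"
begin

definition is_min_poly :: "real \<Rightarrow> rat poly \<Rightarrow> bool" where
  "is_min_poly x p \<longleftrightarrow> lead_coeff p = 1 \<and> irreducible p \<and> poly (map_poly of_rat p) x = 0"

definition conjugates :: "real \<Rightarrow> complex set" where
  "conjugates x = {z. \<exists>p. is_min_poly x p \<and> poly (map_poly of_rat p) z = 0}"

definition salem_number :: "real \<Rightarrow> bool" where
  "salem_number \<beta> \<longleftrightarrow> \<beta> > 1 \<and> algebraic_int \<beta> \<and>
     (\<forall>z\<in>conjugates \<beta>. z \<noteq> complex_of_real \<beta> \<longrightarrow> cmod z \<le> 1) \<and>
     (\<exists>z\<in>conjugates \<beta>. cmod z = 1)"

definition sextic_P :: "int \<Rightarrow> int \<Rightarrow> int \<Rightarrow> int poly" where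
  "sextic_P a b c = [:1, -a, -b, -c, -b, -a, 1:]"

definition trace_Q :: "int \<Rightarrow> int \<Rightarrow> int \<Rightarrow> int poly" where
  "trace_Q a b c = [:-(c - 2*a), -(b+3), -a, 1:]"

definition well_posed_salem6 :: "real \<Rightarrow> bool" where
  "well_posed_salem6 \<beta> \<longleftrightarrow> salem_number \<beta> \<and>
     (\<exists>a b c. is_min_poly \<beta> (map_poly of_int (sextic_P a b c)) \<and>
       (\<exists>\<gamma> \<alpha>1 \<alpha>2::real. \<gamma> = \<beta> + 1/\<beta> \<and>
          (\<forall>y. poly (map_poly of_int (trace_Q a b c)) y = (y - \<gamma>) * (y - \<alpha>1) * (y - \<alpha>2)) \<and>
          -1 < \<alpha>1 \<and> \<alpha>1 < 0 \<and> 0 < \<alpha>2 \<and> \<alpha>2 < 1 \<and> 1 < (2::real) \<and> 2 < \<gamma>))"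

definition dominant_root :: "real \<Rightarrow> int poly \<Rightarrow> bool" where
  "dominant_root x p \<longleftrightarrow> poly (map_poly of_int p) x = 0 \<and>
     (\<forall>z::complex. poly (map_poly of_int p) z = 0 \<longrightarrow> cmod z \<le> \<bar>x\<bar>)"

end

(*
  Since P x = x^3 * Q (x + 1/x), the roots of P are beta, 1/beta and the roots of
  x^2 - alpha x + 1 for the two remaining roots alpha of Q; for |alpha| < 2 these lie on the
  unit circle. So in a well-posed configuration beta is the dominant root of P, and the signs
  of Q at -1, 0, 1, 2 dictated by the position of its roots are exactly conditions (1)-(3).
  Conversely, (2) and (3) give roots of Q in (-1, 0) and (0, 1) by the intermediate value
  theorem, besides gamma = beta + 1/beta > 2.

  The substantial point is that P is then irreducible over Q. The cubic Q has no rational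
  root (such a root would be an integer, and none of gamma, alpha1, alpha2 is one), so it is
  irreducible. A rational F of degree at most 5 with F beta = 0 can be written as
  x^2 (A (x + 1/x) + x B (x + 1/x)) with deg A, deg B <= 2, and A gamma = - beta B gamma
  makes A^2 + y A B + B^2 vanish at gamma, since beta is a root of x^2 - gamma x + 1. Being
  divisible by Q, it also vanishes at the conjugate alpha1, where the quadratic form
  u^2 + alpha1 u v + v^2 is definite; so A and B vanish at alpha1, hence A = B = 0 and F = 0.
*)

theory Submission
  imports Defs
begin

lemma map_poly_of_rat_add:
  "map_poly (of_rat :: rat \<Rightarrow> 'a::field_char_0) (p + q) = map_poly of_rat p + map_poly of_rat q"
  by (rule poly_eqI) (simp add: coeff_map_poly of_rat_add)

lemma map_poly_of_rat_mult:
  "map_poly (of_rat :: rat \<Rightarrow> 'a::field_char_0) (p * q) = map_poly of_rat p * map_poly of_rat q"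
  by (rule poly_eqI) (simp add: coeff_mult coeff_map_poly of_rat_sum of_rat_mult)

lemma map_poly_of_rat_of_int:
  "map_poly (of_rat :: rat \<Rightarrow> 'a::field_char_0) (map_poly of_int p) = map_poly of_int p"
  by (rule poly_eqI) (simp add: coeff_map_poly)

lemma irreducible_dvd_if_common_root:
  fixes p q :: "rat poly" and r :: "'a::field_char_0"
  assumes "irreducible p" "poly (map_poly of_rat p) r = 0" "poly (map_poly of_rat q) r = 0"
  shows "p dvd q"
proof -
  let ?root = "\<lambda>f. f \<noteq> 0 \<and> poly (map_poly of_rat f) r = 0"
  have "?root p"
    using assms(1,2) by auto
  then obtain h where h: "?root h" and minimal: "\<And>f. ?root f \<Longrightarrow> degree h \<le> degree f"
    using ex_has_least_nat[of ?root p degree] by blast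
  have h_dvd: "h dvd f" if "poly (map_poly of_rat f) r = 0" for f
  proof -
    have "f = f div h * h + f mod h"
      by simp
    then have "poly (map_poly of_rat (f mod h)) r = 0"
      using that h by (metis add_0 diff_add_cancel map_poly_of_rat_add map_poly_of_rat_mult
          mult_zero_right poly_add poly_mult)
    then have "f mod h = 0"
      using minimal[of "f mod h"] degree_mod_less'[of h f] h by fastforce
    then show ?thesis
      by (simp add: mod_eq_0_iff_dvd)
  qed
  then obtain k where "p = h * k"
    using assms(2) by (blast elim: dvdE)
  moreover have "\<not> is_unit h"
    using h by (auto simp: is_unit_poly_iff map_poly_pCons)
  ultimately have "is_unit k"
    using assms(1) irreducibleD by blast
  with \<open>p = h * k\<close> h_dvd[OF assms(3)] show ?thesis
    by (simp add: mult_unit_dvd_iff)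
qed

lemma eq_0_if_common_root_of_irreducible:
  fixes p q :: "rat poly" and r :: "'a::field_char_0"
  assumes "irreducible p" "poly (map_poly of_rat p) r = 0" "poly (map_poly of_rat q) r = 0"
    and "degree q < degree p"
  shows "q = 0"
  using irreducible_dvd_if_common_root[OF assms(1-3)] assms(4) dvd_imp_degree_le by fastforce

lemma irreducible_if_no_roots_degree_le_3:
  fixes p :: "'a::field poly"
  assumes deg: "degree p \<in> {2, 3}" and no_root: "\<And>x. poly p x \<noteq> 0"
  shows "irreducible p"
proof (rule irreducibleI)
  show "p \<noteq> 0"
    using deg by auto
  then show "\<not> p dvd 1"
    using deg is_unit_iff_degree[OF \<open>p \<noteq> 0\<close>] by auto
  fix f g assume fg: "p = f * g"
  with \<open>p \<noteq> 0\<close> have "f \<noteq> 0" "g \<noteq> 0" by auto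
  have "degree h \<noteq> 1" if "h dvd p" for h
  proof
    assume "degree h = 1"
    then obtain s t where h: "h = [:t, s:]" "s \<noteq> 0" by (rule degree1_coeffs)
    from \<open>h dvd p\<close> obtain k where "p = h * k" by (rule dvdE)
    then have "poly p (- t / s) = 0" using h by simp
    with no_root show False by blast
  qed
  then have "degree f \<noteq> 1" "degree g \<noteq> 1" using fg by auto
  moreover have "degree f + degree g = degree p"
    using fg degree_mult_eq[OF \<open>f \<noteq> 0\<close> \<open>g \<noteq> 0\<close>] by simp
  ultimately have "degree f = 0 \<or> degree g = 0" using deg by auto
  then show "is_unit f \<or> is_unit g"
    using is_unit_iff_degree \<open>f \<noteq> 0\<close> \<open>g \<noteq> 0\<close> by blast
qed

lemma irreducible_if_no_root_of_smaller_degree: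
  fixes p :: "rat poly" and x :: "'a::field_char_0"
  assumes "0 < degree p" "poly (map_poly of_rat p) x = 0"
    and smaller: "\<And>q. degree q < degree p \<Longrightarrow> poly (map_poly of_rat q) x = 0 \<Longrightarrow> q = 0"
  shows "irreducible p"
proof (rule irreducibleI)
  show "p \<noteq> 0"
    using assms(1) by auto
  then show "\<not> p dvd 1"
    using assms(1) is_unit_iff_degree[OF \<open>p \<noteq> 0\<close>] by auto
  fix f g assume fg: "p = f * g"
  with \<open>p \<noteq> 0\<close> have "f \<noteq> 0" "g \<noteq> 0" by auto
  have deg: "degree p = degree f + degree g"
    using fg degree_mult_eq[OF \<open>f \<noteq> 0\<close> \<open>g \<noteq> 0\<close>] by simp
  have "poly (map_poly of_rat f) x = 0 \<or> poly (map_poly of_rat g) x = 0"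
    using assms(2) by (simp add: fg map_poly_of_rat_mult)
  then have "degree g = 0 \<or> degree f = 0"
    using smaller[of f] smaller[of g] \<open>f \<noteq> 0\<close> \<open>g \<noteq> 0\<close> deg by fastforce
  then show "is_unit f \<or> is_unit g"
    using is_unit_iff_degree \<open>f \<noteq> 0\<close> \<open>g \<noteq> 0\<close> by blast
qed

lemma is_min_poly_unique:
  assumes p: "is_min_poly x p" and q: "is_min_poly x q"
  shows "p = q"
proof -
  have "p dvd q"
    using p q irreducible_dvd_if_common_root unfolding is_min_poly_def by blast
  then obtain k where k: "q = p * k"
    by (rule dvdE)
  with p q have "is_unit k"
    unfolding is_min_poly_def by (meson irreducibleD irreducible_not_unit)
  then obtain c where "k = [:c:]"
    by (auto simp: is_unit_poly_iff)
  moreover have "lead_coeff k = 1"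
    using p q k unfolding is_min_poly_def by (simp add: lead_coeff_mult)
  ultimately show ?thesis
    using k by simp
qed

lemma conjugates_eq_roots_of_min_poly:
  assumes "is_min_poly x p"
  shows "conjugates x = {z. poly (map_poly of_rat p) z = 0}"
  using is_min_poly_unique[OF assms] assms unfolding conjugates_def by blast

lemma poly_sextic_P:
  "poly (map_poly of_int (sextic_P a b c)) (z::'a::comm_ring_1) =
     1 - of_int a * z - of_int b * z^2 - of_int c * z^3 - of_int b * z^4 - of_int a * z^5 + z^6"
  by (simp add: sextic_P_def map_poly_pCons algebra_simps power_numeral_reduce)

lemma poly_trace_Q:
  "poly (map_poly of_int (trace_Q a b c)) (y::'a::comm_ring_1) =
     y^3 - of_int a * y^2 - (of_int b + 3) * y - (of_int c - 2 * of_int a)"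
  by (simp add: trace_Q_def map_poly_pCons algebra_simps power_numeral_reduce)

lemma poly_sextic_P_eq_trace_Q:
  assumes "(z::'a::field) \<noteq> 0"
  shows "poly (map_poly of_int (sextic_P a b c)) z =
    z^3 * poly (map_poly of_int (trace_Q a b c)) (z + 1/z)"
  using assms unfolding poly_sextic_P poly_trace_Q by (simp add: field_simps power_numeral_reduce)

lemma sign_conditions_iff_poly_trace_Q:
  fixes a b c :: int
  defines "Q \<equiv> poly (map_poly of_int (trace_Q a b c)) :: real \<Rightarrow> real"
  shows "(2 - 2*b < 2*a + c \<and> c < 2*a \<and> \<bar>b + 2\<bar> < c - a) \<longleftrightarrow>
    Q (-1) < 0 \<and> 0 < Q 0 \<and> Q 1 < 0 \<and> Q 2 < 0"
  unfolding Q_def poly_trace_Q by (simp add: power_numeral_reduce) linarith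

lemma add_inverse_gt_2:
  fixes x :: real
  assumes "0 < x" "x \<noteq> 1"
  shows "2 < x + 1/x"
proof -
  have "0 < (x - 1)^2 / x"
    using assms by simp
  also have "(x - 1)^2 / x = x + 1/x - 2"
    using assms by (simp add: field_simps power2_eq_square)
  finally show ?thesis by simp
qed

lemma add_inverse_eq_add_inverse_iff:
  fixes z w :: "'a::field"
  assumes "z \<noteq> 0" "w \<noteq> 0"
  shows "z + 1/z = w + 1/w \<longleftrightarrow> z = w \<or> z = 1/w"
proof -
  have "z + 1/z = w + 1/w \<longleftrightarrow> z * (z + 1/z - (w + 1/w)) = 0"
    using assms(1) by simp
  also have "z * (z + 1/z - (w + 1/w)) = (z - w) * (z - 1/w)"
    using assms by (simp add: field_simps)
  finally show ?thesis
    by simp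
qed

lemma norm_eq_1_if_add_inverse_real:
  fixes z :: complex and t :: real
  assumes "z \<noteq> 0" "z + 1/z = of_real t" "\<bar>t\<bar> < 2"
  shows "cmod z = 1"
proof -
  obtain x y where z: "z = Complex x y" by (cases z)
  have nonzero: "x^2 + y^2 \<noteq> 0"
    using assms(1) by (simp add: z Complex_eq_0)
  moreover have "Im (z + 1/z) = 0" "Re (z + 1/z) = t"
    using assms(2) by simp_all
  ultimately have im: "y * (x^2 + y^2 - 1) = 0" and re: "x * (x^2 + y^2 + 1) = t * (x^2 + y^2)"
    by (auto simp: z Im_divide Re_divide field_simps power2_eq_square)
  have "y \<noteq> 0"
  proof
    assume "y = 0"
    with nonzero have "x \<noteq> 0"
      by simp
    with re \<open>y = 0\<close> have "x * (x^2 + 1 - t * x) = 0"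
      by (simp add: algebra_simps power2_eq_square)
    with \<open>x \<noteq> 0\<close> have "t * x = x^2 + 1"
      by simp
    moreover have "2 * \<bar>x\<bar> \<le> x^2 + 1"
      using zero_le_power2[of "\<bar>x\<bar> - 1"] by (simp add: power2_eq_square algebra_simps)
    moreover have "\<bar>t * x\<bar> < 2 * \<bar>x\<bar>"
      using assms(3) \<open>x \<noteq> 0\<close> by (simp add: abs_mult)
    ultimately show False
      by simp
  qed
  with im have "(cmod z)^2 = 1"
    by (simp add: z cmod_power2)
  then show ?thesis
    using norm_ge_zero[of z] by (auto simp: power2_eq_1_iff)
qed

lemma cis_arccos_add_inverse:
  fixes t :: real
  assumes "\<bar>t\<bar> \<le> 2"
  defines "z \<equiv> cis (arccos (t/2))"
  shows "z + 1/z = of_real t"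
proof -
  have "z + 1/z = of_real (2 * cos (arccos (t/2)))"
    unfolding z_def by (simp add: complex_eq_iff flip: inverse_eq_divide)
  also have "2 * cos (arccos (t/2)) = t"
    using assms by (subst cos_arccos) auto
  finally show ?thesis .
qed

lemma cubic_eq_prod_if_distinct_roots:
  fixes e0 e1 e2 r1 r2 r3 :: "'a::field"
  assumes roots: "\<And>r. r \<in> {r1, r2, r3} \<Longrightarrow> r^3 + e2 * r^2 + e1 * r + e0 = 0"
    and distinct: "r1 \<noteq> r2" "r1 \<noteq> r3" "r2 \<noteq> r3"
  shows "y^3 + e2 * y^2 + e1 * y + e0 = (y - r1) * (y - r2) * (y - r3)"
proof -
  define d2 where "d2 = e2 + r1 + r2 + r3"
  define d1 where "d1 = e1 - (r1*r2 + r1*r3 + r2*r3)"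
  define d0 where "d0 = e0 + r1*r2*r3"
  have diff: "x^3 + e2 * x^2 + e1 * x + e0 - (x - r1) * (x - r2) * (x - r3) = d2*x^2 + d1*x + d0" for x
    unfolding d2_def d1_def d0_def by (simp add: algebra_simps power2_eq_square power3_eq_cube)
  have "d2*r^2 + d1*r + d0 = 0" if "r \<in> {r1, r2, r3}" for r
    using diff[of r] roots[OF that] that by auto
  then have e1: "d2*r1^2 + d1*r1 + d0 = 0" and e2: "d2*r2^2 + d1*r2 + d0 = 0"
    and e3: "d2*r3^2 + d1*r3 + d0 = 0" by auto
  have "(r1 - r2) * (d2*(r1 + r2) + d1) = (d2*r1^2 + d1*r1 + d0) - (d2*r2^2 + d1*r2 + d0)"
    "(r1 - r3) * (d2*(r1 + r3) + d1) = (d2*r1^2 + d1*r1 + d0) - (d2*r3^2 + d1*r3 + d0)"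
    by (simp_all add: algebra_simps power2_eq_square)
  then have "d2*(r1 + r2) + d1 = 0" "d2*(r1 + r3) + d1 = 0"
    using e1 e2 e3 distinct by simp_all
  moreover have "d2 * (r2 - r3) = (d2*(r1 + r2) + d1) - (d2*(r1 + r3) + d1)"
    by (simp add: algebra_simps)
  ultimately have "d2 * (r2 - r3) = 0"
    by simp
  then have "d2 = 0"
    using distinct by simp
  with \<open>d2*(r1 + r2) + d1 = 0\<close> have "d1 = 0"
    by simp
  with e1 \<open>d2 = 0\<close> have "d0 = 0" by simp
  with diff[of y] \<open>d2 = 0\<close> \<open>d1 = 0\<close> show ?thesis by simp
qed

lemma definite_quadratic_form_eq_0:
  fixes t u v :: real
  assumes "\<bar>t\<bar> < 2" "u^2 + t * u * v + v^2 = 0"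
  shows "u = 0 \<and> v = 0"
proof -
  have "t^2 < 4"
    using assms(1) abs_le_square_iff[of 2 t] by simp
  have "4 * (u^2 + t * u * v + v^2) = (2 * u + t * v)^2 + (4 - t^2) * v^2"
    by (simp add: algebra_simps power2_eq_square)
  with assms have "(2 * u + t * v)^2 + (4 - t^2) * v^2 = 0"
    by simp
  moreover have "0 \<le> (2 * u + t * v)^2" "0 \<le> (4 - t^2) * v^2"
    using \<open>t^2 < 4\<close> by simp_all
  ultimately have "(4 - t^2) * v^2 = 0"
    by linarith
  then have "v = 0"
    using \<open>t^2 < 4\<close> by simp
  with assms(2) show ?thesis
    by simp
qed

lemma rat_poly_eq_0_if_degree_le_5_root:
  fixes \<beta> \<alpha> :: real and Q F :: "rat poly"
  assumes "\<beta> \<noteq> 0"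
    and Q: "irreducible Q" "3 \<le> degree Q" "poly (map_poly of_rat Q) (\<beta> + 1/\<beta>) = 0"
      "poly (map_poly of_rat Q) \<alpha> = 0"
    and "\<bar>\<alpha>\<bar> < 2"
    and F: "degree F \<le> 5" "poly (map_poly of_rat F) \<beta> = 0"
  shows "F = 0"
proof -
  define \<gamma> where "\<gamma> = \<beta> + 1/\<beta>"
  define f where "f i = coeff F i" for i
  have F_eq: "F = [:f 0, f 1, f 2, f 3, f 4, f 5:]"
  proof (rule poly_eqI)
    fix n
    show "coeff F n = coeff [:f 0, f 1, f 2, f 3, f 4, f 5:] n"
      using F(1) by (cases "n \<le> 5")
      (auto simp: f_def coeff_pCons coeff_eq_0 le_Suc_eq eval_nat_numeral split: nat.split)
  qed
  let ?ev = "\<lambda>p (x::real). poly (map_poly of_rat p) x"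
  \<comment> \<open>\<open>F x = x^2 * (A (x + 1/x) + x * B (x + 1/x))\<close> for \<open>x \<noteq> 0\<close>\<close>
  define A where "A = [:f 2 - f 4 - f 0, f 1 - f 5, f 0:]"
  define B where "B = [:f 3 - f 1 - f 5, f 4 - f 0, f 5:]"
  have "\<beta>^2 * (?ev A \<gamma> + \<beta> * ?ev B \<gamma>) = ?ev F \<beta>"
    unfolding A_def B_def \<gamma>_def using \<open>\<beta> \<noteq> 0\<close>
    by (subst F_eq) (simp add: map_poly_pCons of_rat_add of_rat_diff field_simps power_numeral_reduce)
  with F(2) \<open>\<beta> \<noteq> 0\<close> have AB: "?ev A \<gamma> = - \<beta> * ?ev B \<gamma>"
    by simp
  define R where "R = A * A + [:0, 1:] * A * B + B * B"
  have ev_R: "?ev R x = (?ev A x)^2 + x * ?ev A x * ?ev B x + (?ev B x)^2" for x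
    by (simp add: R_def map_poly_of_rat_add map_poly_of_rat_mult map_poly_pCons power2_eq_square)
  have "?ev R \<gamma> = (?ev B \<gamma>)^2 * (\<beta>^2 - \<gamma> * \<beta> + 1)"
    unfolding ev_R AB by (simp add: algebra_simps power2_eq_square)
  also have "\<beta>^2 - \<gamma> * \<beta> + 1 = 0"
    unfolding \<gamma>_def using \<open>\<beta> \<noteq> 0\<close> by (simp add: field_simps power2_eq_square)
  finally have "Q dvd R"
    using Q(1,3) irreducible_dvd_if_common_root unfolding \<gamma>_def by auto
  then have "?ev R \<alpha> = 0"
    using Q(4) by (auto simp: map_poly_of_rat_mult elim!: dvdE)
  then have "(?ev A \<alpha>)^2 + \<alpha> * ?ev A \<alpha> * ?ev B \<alpha> + (?ev B \<alpha>)^2 = 0"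
    by (simp only: ev_R)
  then have "?ev A \<alpha> = 0 \<and> ?ev B \<alpha> = 0"
    by (rule definite_quadratic_form_eq_0[OF \<open>\<bar>\<alpha>\<bar> < 2\<close>])
  moreover have "degree [:u, v, w:] < degree Q" for u v w :: rat
    using Q(2) degree_pCons_le[of u "[:v, w:]"] degree_pCons_le[of v "[:w:]"] by simp
  ultimately have "A = 0" "B = 0"
    using Q(1,4) eq_0_if_common_root_of_irreducible unfolding A_def B_def by blast+
  then show "F = 0"
    unfolding F_eq A_def B_def by (simp add: algebra_simps)
qed

locale well_posed_roots =
  fixes a b c :: int and \<beta> \<gamma> \<alpha>1 \<alpha>2 :: real
  assumes trace_Q_factors:
      "\<And>y. poly (map_poly of_int (trace_Q a b c)) y = (y - \<gamma>) * (y - \<alpha>1) * (y - \<alpha>2)"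
    and \<alpha>1_bounds: "-1 < \<alpha>1" "\<alpha>1 < 0"
    and \<alpha>2_bounds: "0 < \<alpha>2" "\<alpha>2 < 1"
    and \<beta>_gt_1: "1 < \<beta>"
    and \<gamma>_eq: "\<gamma> = \<beta> + 1/\<beta>"
begin

lemma \<gamma>_gt_2: "2 < \<gamma>"
  unfolding \<gamma>_eq using \<beta>_gt_1 by (intro add_inverse_gt_2) auto

lemma \<alpha>_abs_lt_2: "\<bar>\<alpha>1\<bar> < 2" "\<bar>\<alpha>2\<bar> < 2"
  using \<alpha>1_bounds \<alpha>2_bounds by simp_all

lemma trace_Q_coeffs:
  "of_int a = \<gamma> + \<alpha>1 + \<alpha>2"
  "of_int b = - (\<gamma> * \<alpha>1 + \<gamma> * \<alpha>2 + \<alpha>1 * \<alpha>2) - 3"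
  "of_int c = \<gamma> * \<alpha>1 * \<alpha>2 + 2 * (\<gamma> + \<alpha>1 + \<alpha>2)"
proof -
  have at_0: "of_int c - 2 * of_int a = \<gamma> * \<alpha>1 * \<alpha>2"
    using trace_Q_factors[of 0] by (simp add: poly_trace_Q)
  moreover have "1 - of_int a - (of_int b + 3) - (of_int c - 2 * of_int a) =
      1 - (\<gamma> + \<alpha>1 + \<alpha>2) + (\<gamma> * \<alpha>1 + \<gamma> * \<alpha>2 + \<alpha>1 * \<alpha>2) - \<gamma> * \<alpha>1 * \<alpha>2"
    "-1 - of_int a + (of_int b + 3) - (of_int c - 2 * of_int a) =
      -1 - (\<gamma> + \<alpha>1 + \<alpha>2) - (\<gamma> * \<alpha>1 + \<gamma> * \<alpha>2 + \<alpha>1 * \<alpha>2) - \<gamma> * \<alpha>1 * \<alpha>2"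
    using trace_Q_factors[of 1] trace_Q_factors[of "-1"] by (simp_all add: poly_trace_Q algebra_simps)
  ultimately show a: "of_int a = \<gamma> + \<alpha>1 + \<alpha>2"
    and "of_int b = - (\<gamma> * \<alpha>1 + \<gamma> * \<alpha>2 + \<alpha>1 * \<alpha>2) - 3"
    by linarith+
  from at_0 a show "of_int c = \<gamma> * \<alpha>1 * \<alpha>2 + 2 * (\<gamma> + \<alpha>1 + \<alpha>2)"
    by simp
qed

lemma trace_Q_factors_complex:
  "poly (map_poly of_int (trace_Q a b c)) (w::complex) =
     (w - of_real \<gamma>) * (w - of_real \<alpha>1) * (w - of_real \<alpha>2)"
proof -
  have coeffs: "(of_int a :: complex) = of_real \<gamma> + of_real \<alpha>1 + of_real \<alpha>2"
    "(of_int b :: complex) =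
       - (of_real \<gamma> * of_real \<alpha>1 + of_real \<gamma> * of_real \<alpha>2 + of_real \<alpha>1 * of_real \<alpha>2) - 3"
    "(of_int c :: complex) =
       of_real \<gamma> * of_real \<alpha>1 * of_real \<alpha>2 + 2 * (of_real \<gamma> + of_real \<alpha>1 + of_real \<alpha>2)"
    using trace_Q_coeffs[THEN arg_cong[of _ _ complex_of_real]] by simp_all
  show ?thesis
    unfolding poly_trace_Q coeffs by (simp add: algebra_simps power_numeral_reduce)
qed

lemma sextic_P_root_cases:
  assumes "poly (map_poly of_int (sextic_P a b c)) (z::complex) = 0"
  shows "z = of_real \<beta> \<or> z = 1 / of_real \<beta> \<or> cmod z = 1"
proof -
  have "z \<noteq> 0"
    using assms by (auto simp: poly_sextic_P)
  with assms have "poly (map_poly of_int (trace_Q a b c)) (z + 1/z) = 0"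
    by (simp add: poly_sextic_P_eq_trace_Q)
  then consider "z + 1/z = of_real \<beta> + 1 / of_real \<beta>" | "z + 1/z = of_real \<alpha>1"
    | "z + 1/z = of_real \<alpha>2"
    unfolding trace_Q_factors_complex \<gamma>_eq by fastforce
  then show ?thesis
  proof cases
    case 1
    with \<open>z \<noteq> 0\<close> \<beta>_gt_1 show ?thesis
      using add_inverse_eq_add_inverse_iff[of z "of_real \<beta>"] by auto
  qed (use \<open>z \<noteq> 0\<close> \<alpha>_abs_lt_2 norm_eq_1_if_add_inverse_real in blast)+
qed

lemma sextic_P_root_norm_le_1:
  assumes "poly (map_poly of_int (sextic_P a b c)) (z::complex) = 0" "z \<noteq> of_real \<beta>"
  shows "cmod z \<le> 1"
  using sextic_P_root_cases[OF assms(1)] assms(2) \<beta>_gt_1 by (auto simp: norm_divide)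

lemma dominant_root_sextic_P: "dominant_root \<beta> (sextic_P a b c)"
  unfolding dominant_root_def
proof (intro conjI allI impI)
  show "poly (map_poly of_int (sextic_P a b c)) \<beta> = 0"
    using \<beta>_gt_1 trace_Q_factors[of \<gamma>] by (simp add: poly_sextic_P_eq_trace_Q \<gamma>_eq)
  fix z :: complex
  assume "poly (map_poly of_int (sextic_P a b c)) z = 0"
  then show "cmod z \<le> \<bar>\<beta>\<bar>"
    using sextic_P_root_norm_le_1[of z] \<beta>_gt_1 by (cases "z = of_real \<beta>") auto
qed

lemma sign_conditions: "2 - 2*b < 2*a + c \<and> c < 2*a \<and> \<bar>b + 2\<bar> < c - a"
proof -
  have "(-1 - \<gamma>) * (-1 - \<alpha>1) * (-1 - \<alpha>2) < 0"
    using \<gamma>_gt_2 \<alpha>1_bounds \<alpha>2_bounds by (intro mult_pos_neg mult_neg_neg) auto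
  moreover have "0 < (0 - \<gamma>) * (0 - \<alpha>1) * (0 - \<alpha>2)"
    using \<gamma>_gt_2 \<alpha>1_bounds \<alpha>2_bounds by (intro mult_neg_neg mult_neg_pos) auto
  moreover have "(y - \<gamma>) * (y - \<alpha>1) * (y - \<alpha>2) < 0" if "y \<in> {1, 2}" for y
    using that \<gamma>_gt_2 \<alpha>1_bounds \<alpha>2_bounds by (intro mult_neg_pos) auto
  ultimately show ?thesis
    unfolding sign_conditions_iff_poly_trace_Q trace_Q_factors by simp
qed

lemma trace_Q_no_rat_root: "poly (map_poly of_int (trace_Q a b c)) (s::rat) \<noteq> 0"
proof
  assume "poly (map_poly of_int (trace_Q a b c)) s = 0"
  moreover have "of_rat (poly (map_poly of_int (trace_Q a b c)) s) =
      poly (map_poly of_int (trace_Q a b c)) (of_rat s :: real)"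
    by (simp add: poly_trace_Q of_rat_add of_rat_mult of_rat_diff of_rat_power)
  ultimately have root: "poly (map_poly of_int (trace_Q a b c)) (of_rat s :: real) = 0"
    by simp
  then have "algebraic_int (of_rat s :: real)"
    unfolding algebraic_int_altdef_ipoly by (auto simp: trace_Q_def)
  then have "(of_rat s :: real) \<in> \<int>"
    by (intro rational_algebraic_int_is_int) auto
  then obtain n where n: "of_rat s = (of_int n :: real)"
    by (auto elim: Ints_cases)
  have "of_int n \<noteq> \<alpha>1" "of_int n \<noteq> \<alpha>2"
    using \<alpha>1_bounds \<alpha>2_bounds by (auto simp: n)
  moreover have "of_int n \<noteq> \<gamma>"
  proof
    assume "of_int n = \<gamma>"
    then have "\<alpha>1 * \<alpha>2 = of_int (- (b + 3) - n * (a - n))"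
      using trace_Q_coeffs(1,2) by (simp add: algebra_simps)
    then obtain m :: int where "\<alpha>1 * \<alpha>2 = of_int m"
      by blast
    moreover have "\<alpha>1 < \<alpha>1 * \<alpha>2" "\<alpha>1 * \<alpha>2 < 0"
      using \<alpha>1_bounds \<alpha>2_bounds mult_strict_left_mono_neg[of \<alpha>2 1 \<alpha>1]
      by (auto simp: mult_neg_pos)
    ultimately have "-1 < real_of_int m" "real_of_int m < 0"
      using \<alpha>1_bounds by linarith+
    then show False
      by simp
  qed
  ultimately show False
    using root by (simp add: n trace_Q_factors)
qed

lemma trace_Q_irreducible: "irreducible (map_poly of_int (trace_Q a b c) :: rat poly)"
proof (rule irreducible_if_no_roots_degree_le_3)
  show "degree (map_poly of_int (trace_Q a b c) :: rat poly) \<in> {2, 3}"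
    by (simp add: trace_Q_def map_poly_pCons)
qed (rule trace_Q_no_rat_root)

lemma sextic_P_irreducible: "irreducible (map_poly of_int (sextic_P a b c) :: rat poly)"
proof (rule irreducible_if_no_root_of_smaller_degree)
  show "0 < degree (map_poly of_int (sextic_P a b c) :: rat poly)"
    by (simp add: sextic_P_def map_poly_pCons)
  show "poly (map_poly of_rat (map_poly of_int (sextic_P a b c))) \<beta> = 0"
    using dominant_root_sextic_P by (simp add: dominant_root_def map_poly_of_rat_of_int)
  fix F :: "rat poly"
  assume "degree F < degree (map_poly of_int (sextic_P a b c) :: rat poly)"
    and "poly (map_poly of_rat F) \<beta> = 0"
  moreover have "poly (map_poly of_rat (map_poly of_int (trace_Q a b c) :: rat poly)) x = 0"
    if "x \<in> {\<beta> + 1/\<beta>, \<alpha>1}" for x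
    using that by (auto simp: map_poly_of_rat_of_int trace_Q_factors \<gamma>_eq)
  ultimately show "F = 0"
    using \<beta>_gt_1 trace_Q_irreducible \<alpha>_abs_lt_2(1)
    by (intro rat_poly_eq_0_if_degree_le_5_root[of \<beta> "map_poly of_int (trace_Q a b c)" \<alpha>1])
       (auto simp: sextic_P_def trace_Q_def map_poly_pCons)
qed

lemma sextic_P_is_min_poly: "is_min_poly \<beta> (map_poly of_int (sextic_P a b c))"
proof -
  have "lead_coeff (map_poly of_int (sextic_P a b c) :: rat poly) = 1"
    by (simp add: sextic_P_def map_poly_pCons)
  then show ?thesis
    unfolding is_min_poly_def using sextic_P_irreducible dominant_root_sextic_P
    by (simp add: dominant_root_def map_poly_of_rat_of_int)
qed

lemma \<beta>_salem_number: "salem_number \<beta>"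
proof -
  have conj: "conjugates \<beta> = {z. poly (map_poly of_int (sextic_P a b c)) z = 0}"
    using conjugates_eq_roots_of_min_poly[OF sextic_P_is_min_poly]
    by (simp add: map_poly_of_rat_of_int)
  define z where "z = cis (arccos (\<alpha>1 / 2))"
  have "z + 1/z = of_real \<alpha>1"
    unfolding z_def using \<alpha>_abs_lt_2(1) by (intro cis_arccos_add_inverse) simp
  then have "z \<in> conjugates \<beta>"
    unfolding conj using poly_sextic_P_eq_trace_Q[of z a b c]
    by (simp add: z_def trace_Q_factors_complex)
  moreover have "cmod z = 1"
    by (simp add: z_def)
  moreover have "algebraic_int \<beta>"
    using dominant_root_sextic_P unfolding algebraic_int_altdef_ipoly dominant_root_def
    by (auto simp: sextic_P_def)
  moreover have "cmod w \<le> 1" if "w \<in> conjugates \<beta>" "w \<noteq> of_real \<beta>" for w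
    using that sextic_P_root_norm_le_1 unfolding conj by blast
  ultimately show ?thesis
    unfolding salem_number_def using \<beta>_gt_1 by blast
qed

end

lemma well_posed_roots_if_sign_conditions:
  assumes "1 < \<beta>" "poly (map_poly of_int (sextic_P a b c)) \<beta> = 0"
    and "c < 2*a" "\<bar>b + 2\<bar> < c - a"
  obtains \<alpha>1 \<alpha>2 where "well_posed_roots a b c \<beta> (\<beta> + 1/\<beta>) \<alpha>1 \<alpha>2"
proof -
  let ?Q = "poly (map_poly of_int (trace_Q a b c)) :: real \<Rightarrow> real"
  define \<gamma> where "\<gamma> = \<beta> + 1/\<beta>"
  have "2 < \<gamma>"
    unfolding \<gamma>_def using assms(1) by (intro add_inverse_gt_2) auto
  have "?Q \<gamma> = 0"
    using assms(1,2) poly_sextic_P_eq_trace_Q[of \<beta> a b c] by (simp add: \<gamma>_def)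
  have "?Q (-1) < 0" "0 < ?Q 0" "?Q 1 < 0"
    using assms(3,4) by (simp_all add: poly_trace_Q abs_less_iff)
  then obtain \<alpha>1 \<alpha>2 where \<alpha>1: "-1 < \<alpha>1" "\<alpha>1 < 0" "?Q \<alpha>1 = 0"
    and \<alpha>2: "0 < \<alpha>2" "\<alpha>2 < 1" "?Q \<alpha>2 = 0"
    using poly_IVT_pos[of "-1" 0] poly_IVT_neg[of 0 1] by force
  have expand:
    "?Q y = y^3 + (- of_int a) * y^2 + (- (of_int b + 3)) * y + (- (of_int c - 2 * of_int a))" for y
    by (simp add: poly_trace_Q algebra_simps)
  have "r^3 + (- of_int a) * r^2 + (- (of_int b + 3)) * r + (- (of_int c - 2 * of_int a)) = 0"
    if "r \<in> {\<gamma>, \<alpha>1, \<alpha>2}" for r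
    using that \<open>?Q \<gamma> = 0\<close> \<alpha>1(3) \<alpha>2(3) expand[of r] by auto
  then have "?Q y = (y - \<gamma>) * (y - \<alpha>1) * (y - \<alpha>2)" for y
    unfolding expand using \<alpha>1 \<alpha>2 \<open>2 < \<gamma>\<close>
    by (intro cubic_eq_prod_if_distinct_roots) auto
  then show thesis
    using \<alpha>1 \<alpha>2 assms(1) by (intro that) (unfold_locales, simp_all add: \<gamma>_def)
qed

theorem lemma4:
  fixes \<beta> :: real
  assumes "\<beta> > 1"
  shows "well_posed_salem6 \<beta> \<longleftrightarrow>
    (\<exists>a b c :: int. dominant_root \<beta> (sextic_P a b c) \<and>
       2 - 2*b < 2*a + c \<and> c < 2*a \<and> \<bar>b + 2\<bar> < c - a)"
proof
  assume "well_posed_salem6 \<beta>"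
  then obtain a b c \<gamma> \<alpha>1 \<alpha>2 where "\<gamma> = \<beta> + 1/\<beta>"
    "\<forall>y. poly (map_poly of_int (trace_Q a b c)) y = (y - \<gamma>) * (y - \<alpha>1) * (y - \<alpha>2)"
    "-1 < \<alpha>1" "\<alpha>1 < 0" "0 < \<alpha>2" "\<alpha>2 < 1"
    unfolding well_posed_salem6_def by blast
  then interpret well_posed_roots a b c \<beta> \<gamma> \<alpha>1 \<alpha>2
    using assms by unfold_locales auto
  show "\<exists>a b c :: int. dominant_root \<beta> (sextic_P a b c) \<and>
      2 - 2*b < 2*a + c \<and> c < 2*a \<and> \<bar>b + 2\<bar> < c - a"
    using dominant_root_sextic_P sign_conditions by blast
next
  assume "\<exists>a b c :: int. dominant_root \<beta> (sextic_P a b c) \<and>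
      2 - 2*b < 2*a + c \<and> c < 2*a \<and> \<bar>b + 2\<bar> < c - a"
  then obtain a b c :: int where "poly (map_poly of_int (sextic_P a b c)) \<beta> = 0"
    and "c < 2*a" "\<bar>b + 2\<bar> < c - a"
    unfolding dominant_root_def by blast
  then obtain \<alpha>1 \<alpha>2 where "well_posed_roots a b c \<beta> (\<beta> + 1/\<beta>) \<alpha>1 \<alpha>2"
    using assms by (blast elim: well_posed_roots_if_sign_conditions)
  then interpret well_posed_roots a b c \<beta> "\<beta> + 1/\<beta>" \<alpha>1 \<alpha>2 .
  show "well_posed_salem6 \<beta>"
    unfolding well_posed_salem6_def
    using \<beta>_salem_number sextic_P_is_min_poly trace_Q_factors \<alpha>1_bounds \<alpha>2_bounds \<gamma>_gt_2
    by (intro conjI exI) auto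
qed

end
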